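(* Let $\flat\in\{>,<\}$. For $\imath\in\{1,\dots,2n-1\}$ set $\Xi_\imath=\max\{r\in\frac12\mathbb Z\mid(\imath,r)\in\widehat I^{\mathrm{tw},\flat}_\xi\}$. Then: - $\Xi_\imath=\xi(\imath)$ if $1\le\imath\le n-1$; - $\Xi_n=\frac12(\xi(n-1)+\xi(n))+1$ if $\flat={>}$; - $\Xi_n=\frac12(\xi(n-1)+\xi(n))$ if $\flat={<}$; - $\Xi_\imath=\xi(\imath-1)$ if $n+1\le\imath\le 2n-1$.
   Context: Fix $n\ge2$. Let $\mathcal Q$ be a quiver whose underlying graph is the Dynkin diagram of type $\mathrm A_{2n-2}$ (vertices $1,\dots,2n-2$, edges $\{i,i+1\}$), and let $\xi:\{1,\dots,2n-2\}\to\mathbb Z$ be a height function: $\xi(j)=\xi(i)+1$ whenever there is an arrow $i\to j$. Let $\widehat I_\xi=\{(i,p):1\le i\le 2n-2,\ p\equiv\xi(i)\ (\mathrm{mod}\ 2),\ \xi(2n-1-i)-(2n-1)<p\le\xi(i)\}$. For $\flat\in\{>,<\}$, $\widehat I^{\mathrm{tw},\flat}_\xi\subset\{1,\dots,2n-1\}\times\frac12\mathbb Z$ is the union of: - $\{(i,p)\in\widehat I_\xi: i\le n-1\}$; - $\{(i+1,p):(i,p)\in\widehat I_\xi,\ i\ge n\}$; - the points $(n,p-\frac12)$ for which $\{(n-1,p-1),(n,p)\}\subset\widehat I_\xi$ or $\{(n,p-1),(n-1,p)\}\subset\widehat I_\xi$; - the point $(n,r_M+\frac12)$ if $\flat={>}$,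 resp. $(n,r_m-\frac12)$ if $\flat={<}$, where $r_M$, resp. $r_m$, is the maximum, resp. minimum, of $\{p:(n-1,p)\in\widehat I_\xi\text{ or }(n,p)\in\widehat I_\xi\}$. *)

theory Defs
  imports Complex_Main
begin

text \<open>Orientation of the quiver with underlying graph A_{2n-2}:
  dir i = True means the arrow between i and i+1 is i -> i+1, otherwise i+1 -> i.\<close>
definition is_height_function :: "nat \<Rightarrow> (nat \<Rightarrow> bool) \<Rightarrow> (nat \<Rightarrow> int) \<Rightarrow> bool" where
  "is_height_function n dir \<xi> \<longleftrightarrow>
     (\<forall>i. 1 \<le> i \<and> i + 1 \<le> 2*n - 2 \<longrightarrow>
        (if dir i then \<xi> (i+1) = \<xi> i + 1 else \<xi> i = \<xi> (i+1) + 1))"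

definition Ihat :: "nat \<Rightarrow> (nat \<Rightarrow> int) \<Rightarrow> (nat \<times> int) set" where
  "Ihat n \<xi> = {(i, p). 1 \<le> i \<and> i \<le> 2*n - 2 \<and> p mod 2 = \<xi> i mod 2 \<and>
       \<xi> (2*n - 1 - i) - int (2*n - 1) < p \<and> p \<le> \<xi> i}"

datatype flat = FGt | FLt

definition rM :: "nat \<Rightarrow> (nat \<Rightarrow> int) \<Rightarrow> int" where
  "rM n \<xi> = Max {p. (n - 1, p) \<in> Ihat n \<xi> \<or> (n, p) \<in> Ihat n \<xi>}"

definition rm :: "nat \<Rightarrow> (nat \<Rightarrow> int) \<Rightarrow> int" where
  "rm n \<xi> = Min {p. (n - 1, p) \<in> Ihat n \<xi> \<or> (n, p) \<in> Ihat n \<xi>}"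

definition Itw :: "flat \<Rightarrow> nat \<Rightarrow> (nat \<Rightarrow> int) \<Rightarrow> (nat \<times> rat) set" where
  "Itw b n \<xi> =
     {(i, of_int p) | i p. (i, p) \<in> Ihat n \<xi> \<and> i \<le> n - 1}
   \<union> {(i + 1, of_int p) | i p. (i, p) \<in> Ihat n \<xi> \<and> n \<le> i}
   \<union> {(n, of_int p - 1/2) | p.
        ((n - 1, p - 1) \<in> Ihat n \<xi> \<and> (n, p) \<in> Ihat n \<xi>) \<or>
        ((n, p - 1) \<in> Ihat n \<xi> \<and> (n - 1, p) \<in> Ihat n \<xi>)}
   \<union> (case b of FGt \<Rightarrow> {(n, of_int (rM n \<xi>) + 1/2)}
              | FLt \<Rightarrow> {(n, of_int (rm n \<xi>) - 1/2)})"

definition Xi :: "flat \<Rightarrow> nat \<Rightarrow> (nat \<Rightarrow> int) \<Rightarrow> nat \<Rightarrow> rat" where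
  "Xi b n \<xi> i = Max {r. (i, r) \<in> Itw b n \<xi>}"

end

theory Submission
  imports Defs
begin

text \<open>A height function is 1-Lipschitz, so for every column i the difference
  \<open>\<xi>(2n-1-i) - \<xi>(i)\<close> is at most 2n-3; hence the top point \<open>(i, \<xi> i)\<close> lies in \<open>Ihat n \<xi>\<close>, and it
  bounds its column by definition. This settles all columns except n. In column n the
  inserted points \<open>p - 1/2\<close> need \<open>p \<le> max (\<xi>(n-1)) (\<xi> n)\<close>, and since \<open>\<xi>(n-1)\<close> and \<open>\<xi> n\<close>
  differ by one, the value \<open>max - 1/2 = (\<xi>(n-1) + \<xi> n)/2\<close> is attained. Finally
  \<open>r\<^sub>M = max\<close>, so the extra point \<open>r\<^sub>M + 1/2\<close> exceeds it, while \<open>r\<^sub>m - 1/2\<close> does not.\<close>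

lemma height_function_step:
  assumes "is_height_function n dir \<xi>" "1 \<le> i" "i + 1 \<le> 2*n - 2"
  shows "\<bar>\<xi> (Suc i) - \<xi> i\<bar> = 1"
  using assms unfolding is_height_function_def by (metis Suc_eq_plus1 add_diff_cancel_left' abs_one abs_minus_commute)

lemma height_function_dist:
  assumes "is_height_function n dir \<xi>" "1 \<le> i" "i \<le> j" "j \<le> 2*n - 2"
  shows "\<bar>\<xi> j - \<xi> i\<bar> \<le> int (j - i)"
  using assms(3,4)
proof (induction j rule: dec_induct)
  case base
  then show ?case by simp
next
  case (step j)
  have "\<bar>\<xi> (Suc j) - \<xi> j\<bar> = 1"
    using height_function_step[OF assms(1), of j] assms(2) step.hyps step.prems by simp
  with step show ?case by simp
qed

lemma mem_Ihat_iff: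
  "(i, p) \<in> Ihat n \<xi> \<longleftrightarrow> 1 \<le> i \<and> i \<le> 2*n - 2 \<and> p mod 2 = \<xi> i mod 2 \<and>
     \<xi> (2*n - 1 - i) - int (2*n - 1) < p \<and> p \<le> \<xi> i"
  unfolding Ihat_def by simp

lemma top_mem_Ihat:
  assumes "is_height_function n dir \<xi>" "1 \<le> i" "i \<le> 2*n - 2"
  shows "(i, \<xi> i) \<in> Ihat n \<xi>"
proof -
  define j where "j = 2*n - 1 - i"
  have j: "1 \<le> j" "j \<le> 2*n - 2" using assms(2,3) unfolding j_def by auto
  have "\<bar>\<xi> j - \<xi> i\<bar> \<le> int (2*n - 3)"
  proof (cases "i \<le> j")
    case True
    then show ?thesis using height_function_dist[OF assms(1,2) True j(2)] j assms(2) by simp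
  next
    case False
    then have "\<bar>\<xi> i - \<xi> j\<bar> \<le> int (i - j)"
      using height_function_dist[OF assms(1) j(1) _ assms(3)] by simp
    then show ?thesis using False j assms(3) by (simp add: abs_minus_commute)
  qed
  then show ?thesis unfolding mem_Ihat_iff j_def[symmetric] using assms(2,3) j by auto
qed

lemma finite_Ihat: "finite (Ihat n \<xi>)"
proof (rule finite_subset)
  show "Ihat n \<xi> \<subseteq> Sigma {1..2*n-2} (\<lambda>i. {\<xi> (2*n-1-i) - int (2*n-1) <.. \<xi> i})"
    unfolding Ihat_def by auto
qed (rule finite_SigmaI; simp)

lemma finite_Itw_column: "finite {r. (i, r) \<in> Itw b n \<xi>}"
proof (rule finite_subset)
  let ?P = "snd ` Ihat n \<xi>"
  show "{r. (i, r) \<in> Itw b n \<xi>} \<subseteq> of_int ` ?P \<union> (\<lambda>p. of_int p - 1/2) ` ?P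
      \<union> {of_int (rM n \<xi>) + 1/2, of_int (rm n \<xi>) - 1/2}"
    unfolding Itw_def by (auto split: flat.splits) (force intro: image_eqI)+
  show "finite (of_int ` ?P \<union> (\<lambda>p. of_int p - 1/2) ` ?P
      \<union> {of_int (rM n \<xi>) + 1/2, of_int (rm n \<xi>) - 1/2 :: rat})"
    using finite_Ihat by simp
qed

lemma Xi_eqI:
  assumes "(i, r) \<in> Itw b n \<xi>" "\<And>s. (i, s) \<in> Itw b n \<xi> \<Longrightarrow> s \<le> r"
  shows "Xi b n \<xi> i = r"
  unfolding Xi_def using assms finite_Itw_column by (intro Max_eqI) auto

lemma Xi_low_column:
  assumes "is_height_function n dir \<xi>" "n \<ge> 2" "1 \<le> i" "i \<le> n - 1"
  shows "Xi b n \<xi> i = of_int (\<xi> i)"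
proof (rule Xi_eqI)
  show "(i, of_int (\<xi> i)) \<in> Itw b n \<xi>"
    using top_mem_Ihat[OF assms(1,3)] assms(4) unfolding Itw_def by auto
  show "\<And>s. (i, s) \<in> Itw b n \<xi> \<Longrightarrow> s \<le> of_int (\<xi> i)"
    using assms(2,3,4) unfolding Itw_def mem_Ihat_iff by (auto split: flat.splits)
qed

lemma Xi_high_column:
  assumes "is_height_function n dir \<xi>" "n \<ge> 2" "n + 1 \<le> i" "i \<le> 2*n - 1"
  shows "Xi b n \<xi> i = of_int (\<xi> (i - 1))"
proof (rule Xi_eqI)
  have "(i - 1, \<xi> (i - 1)) \<in> Ihat n \<xi>" using top_mem_Ihat[OF assms(1)] assms(3,4) by auto
  then have "\<exists>j p. (i, of_int (\<xi> (i - 1))) = (j + 1, of_int p) \<and> (j, p) \<in> Ihat n \<xi> \<and> n \<le> j"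
    using assms(3) by (intro exI[of _ "i - 1"] exI[of _ "\<xi> (i - 1)"]) auto
  then show "(i, of_int (\<xi> (i - 1))) \<in> Itw b n \<xi>" unfolding Itw_def by blast
  show "\<And>s. (i, s) \<in> Itw b n \<xi> \<Longrightarrow> s \<le> of_int (\<xi> (i - 1))"
    using assms(2,3) unfolding Itw_def mem_Ihat_iff by (auto split: flat.splits)
qed

lemma middle_column_cases:
  assumes "n \<ge> 2" "(n, s) \<in> Itw b n \<xi>"
  shows "s \<le> of_int (max (\<xi> (n - 1)) (\<xi> n)) - 1/2
    \<or> (b = FGt \<and> s = of_int (rM n \<xi>) + 1/2) \<or> (b = FLt \<and> s = of_int (rm n \<xi>) - 1/2)"
  using assms unfolding Itw_def mem_Ihat_iff by (auto split: flat.splits simp: le_max_iff_disj)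

lemma middle_column_mem:
  assumes "is_height_function n dir \<xi>" "n \<ge> 2"
  shows "(n, of_int (max (\<xi> (n - 1)) (\<xi> n)) - 1/2) \<in> Itw b n \<xi>"
proof -
  have a: "(n - 1, \<xi> (n - 1)) \<in> Ihat n \<xi>" and c: "(n, \<xi> n) \<in> Ihat n \<xi>"
    using top_mem_Ihat[OF assms(1)] assms(2) by auto
  have "\<bar>\<xi> n - \<xi> (n - 1)\<bar> = 1" using height_function_step[OF assms(1), of "n - 1"] assms(2) by simp
  then consider "\<xi> n = \<xi> (n - 1) + 1" | "\<xi> (n - 1) = \<xi> n + 1" by linarith
  then show ?thesis
    by cases (use a c in \<open>auto simp: Itw_def max_def\<close>)
qed

lemma rM_eq_max:
  assumes "is_height_function n dir \<xi>" "n \<ge> 2"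
  shows "rM n \<xi> = max (\<xi> (n - 1)) (\<xi> n)"
  unfolding rM_def
proof (rule Max_eqI)
  show "finite {p. (n - 1, p) \<in> Ihat n \<xi> \<or> (n, p) \<in> Ihat n \<xi>}"
    by (rule finite_subset[of _ "snd ` Ihat n \<xi>"]) (force, simp add: finite_Ihat)
  show "max (\<xi> (n - 1)) (\<xi> n) \<in> {p. (n - 1, p) \<in> Ihat n \<xi> \<or> (n, p) \<in> Ihat n \<xi>}"
    using top_mem_Ihat[OF assms(1)] assms(2) by (simp add: max_def)
qed (auto simp: mem_Ihat_iff)

lemma rm_le_max:
  assumes "is_height_function n dir \<xi>" "n \<ge> 2"
  shows "rm n \<xi> \<le> max (\<xi> (n - 1)) (\<xi> n)"
proof -
  have "rm n \<xi> \<le> \<xi> n"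
    unfolding rm_def
  proof (rule Min_le)
    show "finite {p. (n - 1, p) \<in> Ihat n \<xi> \<or> (n, p) \<in> Ihat n \<xi>}"
      by (rule finite_subset[of _ "snd ` Ihat n \<xi>"]) (force, simp add: finite_Ihat)
  qed (use top_mem_Ihat[OF assms(1)] assms(2) in simp)
  then show ?thesis by simp
qed

lemma max_sub_half_eq_mean:
  fixes a c :: int
  assumes "\<bar>c - a\<bar> = 1"
  shows "(of_int (max a c) - 1/2 :: 'a :: linordered_field) = of_int (a + c) / 2"
  using assms by (cases "c = a + 1") (auto simp: field_simps max_def)

lemma Xi_middle_column:
  assumes "is_height_function n dir \<xi>" "n \<ge> 2"
  shows "Xi b n \<xi> n = of_int (\<xi> (n - 1) + \<xi> n) / 2 + (if b = FGt then 1 else 0)"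
proof -
  let ?m = "of_int (max (\<xi> (n - 1)) (\<xi> n)) :: rat"
  have mean: "?m - 1/2 = of_int (\<xi> (n - 1) + \<xi> n) / 2"
    using height_function_step[OF assms(1), of "n - 1"] assms(2)
    by (intro max_sub_half_eq_mean) (simp add: abs_minus_commute)
  show ?thesis
  proof (cases b)
    case FGt
    have "Xi b n \<xi> n = ?m + 1/2"
    proof (rule Xi_eqI)
      show "(n, ?m + 1/2) \<in> Itw b n \<xi>" using rM_eq_max[OF assms] FGt by (simp add: Itw_def)
      show "s \<le> ?m + 1/2" if "(n, s) \<in> Itw b n \<xi>" for s
        using middle_column_cases[OF assms(2) that] rM_eq_max[OF assms] FGt by auto
    qed
    then show ?thesis using mean FGt by (simp add: field_simps)
  next
    case FLt
    have "Xi b n \<xi> n = ?m - 1/2"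
      using middle_column_mem[OF assms] middle_column_cases[OF assms(2)] rm_le_max[OF assms] FLt
      by (intro Xi_eqI) fastforce+
    then show ?thesis using mean FLt by simp
  qed
qed

theorem lemma3p23:
  fixes n :: nat and dir :: "nat \<Rightarrow> bool" and \<xi> :: "nat \<Rightarrow> int" and b :: flat
  assumes "n \<ge> 2"
    and "is_height_function n dir \<xi>"
  shows "(\<forall>i. 1 \<le> i \<and> i \<le> n - 1 \<longrightarrow> Xi b n \<xi> i = of_int (\<xi> i))
       \<and> (b = FGt \<longrightarrow> Xi b n \<xi> n = of_int (\<xi> (n - 1) + \<xi> n) / 2 + 1)
       \<and> (b = FLt \<longrightarrow> Xi b n \<xi> n = of_int (\<xi> (n - 1) + \<xi> n) / 2)
       \<and> (\<forall>i. n + 1 \<le> i \<and> i \<le> 2*n - 1 \<longrightarrow> Xi b n \<xi> i = of_int (\<xi> (i - 1)))"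
  using Xi_low_column[OF assms(2,1)] Xi_middle_column[OF assms(2,1)] Xi_high_column[OF assms(2,1)]
  by auto

end
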